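(* Let $X$ be a real normed linear space and $x\in X\setminus\{\theta\}$. Let $y_1,y_2\in X\setminus\{\theta\}$ satisfy $x\perp_B^\varepsilon y_1$ and $x\perp_B^\varepsilon y_2$, where $\varepsilon\in[0,1)$ is such that $$0\le\varepsilon<\frac{2\|y_1+y_2\|}{3(\|y_1\|+\|y_2\|)}<1.$$ If $x$ is $\varepsilon$-smooth, then there exists $\varepsilon_1\in[0,1)$ such that $x\perp_B^{\varepsilon_1}(y_1+y_2)$.
   Context: For $\delta\in[0,1)$, $x\perp_B^\delta y$ (approximate Birkhoff–James orthogonality) means $\|x+\lambda y\|^2\ge\|x\|^2-2\delta\|x\|\|\lambda y\|$ for all $\lambda\in\mathbb{R}$. For $x\neq\theta$, $J(x)=\{f\in S_{X^*}:f(x)=\|x\|\}$, and $x$ is $\varepsilon$-smooth if $\sup_{f,g\in J(x)}\|f-g\|\le\varepsilon$. *)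

theory Defs
  imports "HOL-Analysis.Analysis"
begin

definition approx_bj_orth :: "real \<Rightarrow> 'a::real_normed_vector \<Rightarrow> 'a \<Rightarrow> bool" where
  "approx_bj_orth \<delta> x y \<longleftrightarrow>
     (\<forall>t::real. (norm (x + t *\<^sub>R y))\<^sup>2 \<ge> (norm x)\<^sup>2 - 2 * \<delta> * norm x * norm (t *\<^sub>R y))"

definition support_functionals :: "'a::real_normed_vector \<Rightarrow> ('a \<Rightarrow>\<^sub>L real) set" where
  "support_functionals x = {f. norm f = 1 \<and> blinfun_apply f x = norm x}"

definition eps_smooth :: "real \<Rightarrow> 'a::real_normed_vector \<Rightarrow> bool" where
  "eps_smooth \<epsilon> x \<longleftrightarrow>
     (\<forall>f\<in>support_functionals x. \<forall>g\<in>support_functionals x. norm (f - g) \<le> \<epsilon>)"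

end

(* By Hahn-Banach, x is eps-Birkhoff-James orthogonal to y exactly when some functional f with
   norm f <= 1 and f x = norm x satisfies |f y| <= eps * norm y (Chmielinski's characterization).
   Take such f1 for y1 and f2 for y2: both lie in J(x), so eps-smoothness gives
   norm (f1 - f2) <= eps, whence |f1 (y1 + y2)| + |f2 (y1 + y2)| <= 3 eps (norm y1 + norm y2).
   The smaller of the two witnesses orthogonality to y1 + y2 with
   eps1 = 3 eps (norm y1 + norm y2) / (2 norm (y1 + y2)), and the hypothesis on eps says eps1 < 1. *)

theory Submission
  imports Defs
begin

section \<open>Hahn-Banach for sublinear functionals\<close>

definition sublinear :: "('a::real_vector \<Rightarrow> real) \<Rightarrow> bool" where
  "sublinear p \<longleftrightarrow>
     (\<forall>u v. p (u + v) \<le> p u + p v) \<and> (\<forall>c u. 0 \<le> c \<longrightarrow> p (c *\<^sub>R u) = c * p u)"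

lemma sublinear_norm: "sublinear norm"
  unfolding sublinear_def by (simp add: norm_triangle_ineq)

lemma sublinear_add: "sublinear p \<Longrightarrow> p (u + v) \<le> p u + p v"
  unfolding sublinear_def by blast

lemma sublinear_scaleR: "sublinear p \<Longrightarrow> 0 \<le> c \<Longrightarrow> p (c *\<^sub>R u) = c * p u"
  unfolding sublinear_def by blast

lemma sublinear_zero: "sublinear p \<Longrightarrow> p 0 = 0"
  using sublinear_scaleR[of p 0 0] by simp

text \<open>A linear functional on a subspace is represented by its graph, so that extensions are
  supersets and Zorn's lemma applies to inclusion; single-valuedness follows from domination.\<close>
definition dominated_linear_graph :: "('a::real_vector \<Rightarrow> real) \<Rightarrow> ('a \<times> real) set \<Rightarrow> bool" where
  "dominated_linear_graph p H \<longleftrightarrow> (0, 0) \<in> H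
     \<and> (\<forall>u r v s. (u, r) \<in> H \<longrightarrow> (v, s) \<in> H \<longrightarrow> (u + v, r + s) \<in> H)
     \<and> (\<forall>u r c. (u, r) \<in> H \<longrightarrow> (c *\<^sub>R u, c * r) \<in> H)
     \<and> (\<forall>u r. (u, r) \<in> H \<longrightarrow> r \<le> p u)"

lemma dominated_linear_graph_zero: "dominated_linear_graph p H \<Longrightarrow> (0, 0) \<in> H"
  unfolding dominated_linear_graph_def by blast

lemma dominated_linear_graph_add:
  "dominated_linear_graph p H \<Longrightarrow> (u, r) \<in> H \<Longrightarrow> (v, s) \<in> H \<Longrightarrow> (u + v, r + s) \<in> H"
  unfolding dominated_linear_graph_def by blast

lemma dominated_linear_graph_scaleR:
  "dominated_linear_graph p H \<Longrightarrow> (u, r) \<in> H \<Longrightarrow> (c *\<^sub>R u, c * r) \<in> H"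
  unfolding dominated_linear_graph_def by blast

lemma dominated_linear_graph_le: "dominated_linear_graph p H \<Longrightarrow> (u, r) \<in> H \<Longrightarrow> r \<le> p u"
  unfolding dominated_linear_graph_def by blast

lemma dominated_linear_graph_functional:
  assumes p: "sublinear p" and H: "dominated_linear_graph p H"
    and "(v, r) \<in> H" "(v, s) \<in> H"
  shows "r = s"
proof -
  have "(v + (-1) *\<^sub>R v, r + (-1) * s) \<in> H" "(v + (-1) *\<^sub>R v, s + (-1) * r) \<in> H"
    using assms by (blast intro: dominated_linear_graph_add dominated_linear_graph_scaleR)+
  then have "r - s \<le> p 0" "s - r \<le> p 0"
    using dominated_linear_graph_le[OF H] by fastforce+
  then show ?thesis
    using sublinear_zero[OF p] by simp
qed

lemma dominated_linear_graph_gap: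
  assumes p: "sublinear p" and H: "dominated_linear_graph p H"
    and "(u, r) \<in> H" "(v, s) \<in> H"
  shows "r - p (u - z) \<le> p (v + z) - s"
proof -
  have "r + s \<le> p (u + v)"
    using assms by (blast intro: dominated_linear_graph_add dominated_linear_graph_le)
  also have "\<dots> \<le> p (u - z) + p (v + z)"
    using sublinear_add[OF p, of "u - z" "v + z"] by simp
  finally show ?thesis by simp
qed

lemma dominated_linear_graph_gap_Sup:
  assumes p: "sublinear p" and H: "dominated_linear_graph p H" and "(u, r) \<in> H"
  shows "r - p (u - z) \<le> Sup {s - p (v - z) | v s. (v, s) \<in> H}"
    and "Sup {s - p (v - z) | v s. (v, s) \<in> H} \<le> p (u + z) - r"
proof -
  have upper: "w \<le> p (u + z) - r" if "w \<in> {s - p (v - z) | v s. (v, s) \<in> H}" for w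
    using that dominated_linear_graph_gap[OF p H _ \<open>(u, r) \<in> H\<close>] by blast
  show "r - p (u - z) \<le> Sup {s - p (v - z) | v s. (v, s) \<in> H}"
    using upper \<open>(u, r) \<in> H\<close> by (intro cSup_upper bdd_aboveI) auto
  show "Sup {s - p (v - z) | v s. (v, s) \<in> H} \<le> p (u + z) - r"
    using upper \<open>(u, r) \<in> H\<close> by (intro cSup_least) auto
qed

lemma dominated_linear_graph_extend:
  assumes p: "sublinear p" and H: "dominated_linear_graph p H"
    and c: "\<And>u r. (u, r) \<in> H \<Longrightarrow> r + c \<le> p (u + z) \<and> r - c \<le> p (u - z)"
  shows "dominated_linear_graph p {(u + a *\<^sub>R z, r + a * c) | u r a. (u, r) \<in> H}"
    (is "dominated_linear_graph p ?H")
  unfolding dominated_linear_graph_def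
proof (intro conjI allI impI)
  have "(0, 0) = (0 + 0 *\<^sub>R z, 0 + 0 * c)" by simp
  then show "(0, 0) \<in> ?H"
    using dominated_linear_graph_zero[OF H] by blast
next
  fix v s v' s' assume "(v, s) \<in> ?H" "(v', s') \<in> ?H"
  then obtain u r a u' r' a' where "(u, r) \<in> H" "(u', r') \<in> H"
    and "v = u + a *\<^sub>R z" "s = r + a * c" "v' = u' + a' *\<^sub>R z" "s' = r' + a' * c"
    by blast
  moreover have "(u + u', r + r') \<in> H"
    using calculation dominated_linear_graph_add[OF H] by blast
  ultimately have "(v + v', s + s') = ((u + u') + (a + a') *\<^sub>R z, (r + r') + (a + a') * c)
      \<and> (u + u', r + r') \<in> H"
    by (simp add: algebra_simps)
  then show "(v + v', s + s') \<in> ?H"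
    by blast
next
  fix v s b assume "(v, s) \<in> ?H"
  then obtain u r a where "(u, r) \<in> H" and "v = u + a *\<^sub>R z" "s = r + a * c"
    by blast
  moreover have "(b *\<^sub>R u, b * r) \<in> H"
    using calculation dominated_linear_graph_scaleR[OF H] by blast
  ultimately have "(b *\<^sub>R v, b * s) = (b *\<^sub>R u + (b * a) *\<^sub>R z, b * r + (b * a) * c)
      \<and> (b *\<^sub>R u, b * r) \<in> H"
    by (simp add: algebra_simps)
  then show "(b *\<^sub>R v, b * s) \<in> ?H"
    by blast
next
  fix v s assume "(v, s) \<in> ?H"
  then obtain u r a where ur: "(u, r) \<in> H" and v: "v = u + a *\<^sub>R z" and s: "s = r + a * c"
    by blast
  show "s \<le> p v"
  proof (cases "a = 0")
    case True
    then show ?thesis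
      using dominated_linear_graph_le[OF H ur] v s by simp
  next
    case False
    define b where "b = \<bar>a\<bar>"
    have b: "0 < b" "b * sgn a = a"
      using False by (simp_all add: b_def abs_mult_sgn)
    have "((1 / b) *\<^sub>R u, (1 / b) * r) \<in> H"
      using dominated_linear_graph_scaleR[OF H ur] .
    then have "(1 / b) * r + sgn a * c \<le> p ((1 / b) *\<^sub>R u + sgn a *\<^sub>R z)"
      using c False by (cases "0 < a") (auto simp: sgn_if)
    have "s = b * ((1 / b) * r + sgn a * c)"
      using b s by (simp add: distrib_left flip: mult.assoc)
    also have "\<dots> \<le> b * p ((1 / b) *\<^sub>R u + sgn a *\<^sub>R z)"
      using \<open>(1 / b) * r + sgn a * c \<le> _\<close> b by (simp add: mult_left_mono)
    also have "\<dots> = p (b *\<^sub>R ((1 / b) *\<^sub>R u + sgn a *\<^sub>R z))"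
      using sublinear_scaleR[OF p] b by simp
    also have "b *\<^sub>R ((1 / b) *\<^sub>R u + sgn a *\<^sub>R z) = v"
      using b v by (simp add: scaleR_add_right)
    finally show ?thesis .
  qed
qed

lemma dominated_linear_graph_Union_chain:
  assumes "C \<noteq> {}" and chain: "chain\<^sub>\<subseteq> C" and C: "\<And>H. H \<in> C \<Longrightarrow> dominated_linear_graph p H"
  shows "dominated_linear_graph p (\<Union>C)"
  unfolding dominated_linear_graph_def
proof (intro conjI allI impI)
  show "(0, 0) \<in> \<Union>C"
    using \<open>C \<noteq> {}\<close> C dominated_linear_graph_zero by blast
next
  fix u r v s assume "(u, r) \<in> \<Union>C" "(v, s) \<in> \<Union>C"
  then obtain H H' where "H \<in> C" "H' \<in> C" "(u, r) \<in> H" "(v, s) \<in> H'"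
    by blast
  moreover from chain have "H \<subseteq> H' \<or> H' \<subseteq> H"
    using \<open>H \<in> C\<close> \<open>H' \<in> C\<close> by (auto simp: chain_subset_def)
  ultimately show "(u + v, r + s) \<in> \<Union>C"
    using C dominated_linear_graph_add by blast
next
  fix u r c assume "(u, r) \<in> \<Union>C"
  then show "(c *\<^sub>R u, c * r) \<in> \<Union>C"
    using C dominated_linear_graph_scaleR by blast
next
  fix u r assume "(u, r) \<in> \<Union>C"
  then show "r \<le> p u"
    using C dominated_linear_graph_le by blast
qed

lemma dominated_linear_graph_maximal_exists:
  assumes H0: "dominated_linear_graph p H0"
  obtains M where "dominated_linear_graph p M" "H0 \<subseteq> M"
    "\<And>H. dominated_linear_graph p H \<Longrightarrow> M \<subseteq> H \<Longrightarrow> H = M"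
proof -
  define A where "A = {H. dominated_linear_graph p H \<and> H0 \<subseteq> H}"
  have "\<exists>U\<in>A. \<forall>H\<in>C. H \<subseteq> U" if "C \<in> chains A" for C
  proof (cases "C = {}")
    case True
    then show ?thesis
      using H0 by (auto simp: A_def)
  next
    case False
    moreover have "C \<subseteq> A" "chain\<^sub>\<subseteq> C"
      using that by (simp_all add: chains_def)
    ultimately have "\<Union>C \<in> A"
      using dominated_linear_graph_Union_chain[of C p] by (auto simp: A_def)
    then show ?thesis by blast
  qed
  then obtain M where "M \<in> A" and "\<And>H. H \<in> A \<Longrightarrow> M \<subseteq> H \<Longrightarrow> H = M"
    using Zorn_Lemma2[of A] by (meson Ball_def)
  then show ?thesis
    using that by (auto simp: A_def)
qed

lemma dominated_linear_graph_maximal_total: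
  assumes p: "sublinear p" and M: "dominated_linear_graph p M"
    and maximal: "\<And>H. dominated_linear_graph p H \<Longrightarrow> M \<subseteq> H \<Longrightarrow> H = M"
  shows "\<exists>r. (v, r) \<in> M"
proof -
  define c where "c = Sup {s - p (u - v) | u s. (u, s) \<in> M}"
  define M' where "M' = {(u + a *\<^sub>R v, r + a * c) | u r a. (u, r) \<in> M}"
  have "r + c \<le> p (u + v) \<and> r - c \<le> p (u - v)" if "(u, r) \<in> M" for u r
    using dominated_linear_graph_gap_Sup[OF p M that, of v] unfolding c_def by linarith
  then have "dominated_linear_graph p M'"
    unfolding M'_def by (rule dominated_linear_graph_extend[OF p M])
  moreover have "M \<subseteq> M'"
  proof (rule subrelI)
    fix u r assume "(u, r) \<in> M"
    moreover have "(u, r) = (u + 0 *\<^sub>R v, r + 0 * c)" by simp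
    ultimately show "(u, r) \<in> M'"
      unfolding M'_def by blast
  qed
  ultimately have "M' = M"
    by (rule maximal)
  moreover have "(v, c) \<in> M'"
  proof -
    have "(v, c) = (0 + 1 *\<^sub>R v, 0 + 1 * c)" by simp
    then show ?thesis
      unfolding M'_def using dominated_linear_graph_zero[OF M] by blast
  qed
  ultimately show ?thesis by blast
qed

lemma dominated_linear_graph_total_linear:
  assumes p: "sublinear p" and M: "dominated_linear_graph p M" and total: "\<And>v. \<exists>r. (v, r) \<in> M"
  obtains F where "linear F" "\<And>v. F v \<le> p v" "\<And>v r. (v, r) \<in> M \<longleftrightarrow> F v = r"
proof -
  define F where "F v = (THE r. (v, r) \<in> M)" for v
  have graph: "(v, r) \<in> M \<longleftrightarrow> F v = r" for v r
  proof -
    have "\<exists>!r. (v, r) \<in> M"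
      using total dominated_linear_graph_functional[OF p M] by blast
    then show ?thesis
      unfolding F_def by (metis theI')
  qed
  have "linear F"
  proof (rule linearI)
    fix u v :: 'a and b :: real
    show "F (u + v) = F u + F v"
      using dominated_linear_graph_add[OF M] graph by blast
    show "F (b *\<^sub>R u) = b *\<^sub>R F u"
      using dominated_linear_graph_scaleR[OF M] graph by auto
  qed
  moreover have "F v \<le> p v" for v
    using graph dominated_linear_graph_le[OF M] by blast
  ultimately show ?thesis
    using that graph by blast
qed

theorem hahn_banach_sublinear:
  assumes p: "sublinear p" and H0: "dominated_linear_graph p H0"
  obtains F where "linear F" "\<And>v. F v \<le> p v" "\<And>v r. (v, r) \<in> H0 \<Longrightarrow> F v = r"
proof -
  obtain M where M: "dominated_linear_graph p M" and "H0 \<subseteq> M"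
    and "\<And>H. dominated_linear_graph p H \<Longrightarrow> M \<subseteq> H \<Longrightarrow> H = M"
    using dominated_linear_graph_maximal_exists[OF H0] by blast
  then have "\<exists>r. (v, r) \<in> M" for v
    using dominated_linear_graph_maximal_total[OF p] by blast
  then obtain F where "linear F" "\<And>v. F v \<le> p v" "\<And>v r. (v, r) \<in> M \<longleftrightarrow> F v = r"
    using dominated_linear_graph_total_linear[OF p M] by blast
  then show ?thesis
    using that \<open>H0 \<subseteq> M\<close> by blast
qed

corollary hahn_banach_norm:
  fixes H :: "('a::real_normed_vector \<times> real) set"
  assumes "dominated_linear_graph norm H"
  shows "\<exists>f::'a \<Rightarrow>\<^sub>L real. norm f \<le> 1 \<and> (\<forall>v r. (v, r) \<in> H \<longrightarrow> blinfun_apply f v = r)"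
proof -
  obtain F where F: "linear F" "\<And>v. F v \<le> norm v" "\<And>v r. (v, r) \<in> H \<Longrightarrow> F v = r"
    using hahn_banach_sublinear[OF sublinear_norm assms] by blast
  have bound: "norm (F v) \<le> norm v * 1" for v
  proof -
    have "F v \<le> norm v" "- F v \<le> norm v"
      using F(2)[of v] F(2)[of "- v"] linear_neg[OF F(1), of v] by simp_all
    then show ?thesis by simp
  qed
  define f where "f = Blinfun F"
  have "bounded_linear F"
    using bounded_linear_intro[OF linear_add[OF F(1)] linear_scale[OF F(1)] bound] .
  then have f: "blinfun_apply f = F"
    unfolding f_def by (rule bounded_linear_Blinfun_apply)
  have "norm f \<le> 1"
    using bound by (intro norm_blinfun_bound) (simp_all add: f)
  then show ?thesis
    using F(3) f by blast
qed

lemma dominated_linear_graph_norm_line: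
  "dominated_linear_graph norm (range (\<lambda>a. (a *\<^sub>R x, a * norm x)))"
  unfolding dominated_linear_graph_def
proof (intro conjI allI impI)
  show "(0, 0) \<in> range (\<lambda>a. (a *\<^sub>R x, a * norm x))"
    by (auto intro: range_eqI[of _ _ 0])
next
  fix u r v s
  assume "(u, r) \<in> range (\<lambda>a. (a *\<^sub>R x, a * norm x))" "(v, s) \<in> range (\<lambda>a. (a *\<^sub>R x, a * norm x))"
  then obtain a b where "(u + v, r + s) = ((a + b) *\<^sub>R x, (a + b) * norm x)"
    by (auto simp: algebra_simps)
  then show "(u + v, r + s) \<in> range (\<lambda>a. (a *\<^sub>R x, a * norm x))"
    by (intro range_eqI[of _ _ "a + b"]) simp
next
  fix u r c assume "(u, r) \<in> range (\<lambda>a. (a *\<^sub>R x, a * norm x))"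
  then obtain a where "u = a *\<^sub>R x" "r = a * norm x"
    by auto
  then show "(c *\<^sub>R u, c * r) \<in> range (\<lambda>a. (a *\<^sub>R x, a * norm x))"
    by (intro range_eqI[of _ _ "c * a"]) simp
next
  fix u r assume "(u, r) \<in> range (\<lambda>a. (a *\<^sub>R x, a * norm x))"
  then show "r \<le> norm u"
    using mult_right_mono[OF abs_ge_self norm_ge_zero] by auto
qed

section \<open>Approximate orthogonality and norming functionals\<close>

lemma approx_bj_orth_uminus_right: "approx_bj_orth \<epsilon> x (- y) \<longleftrightarrow> approx_bj_orth \<epsilon> x y"
proof -
  have "approx_bj_orth \<epsilon> x (- y)" if "approx_bj_orth \<epsilon> x y" for y :: 'a
    unfolding approx_bj_orth_def
  proof
    fix t :: real
    show "(norm x)\<^sup>2 - 2 * \<epsilon> * norm x * norm (t *\<^sub>R - y) \<le> (norm (x + t *\<^sub>R - y))\<^sup>2"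
      using that[unfolded approx_bj_orth_def, rule_format, of "- t"] by simp
  qed
  from this[of y] this[of "- y"] show ?thesis by auto
qed

text \<open>Applied to \<open>\<phi> s = norm (x + s *\<^sub>R y)\<close>, which lies below its chords by convexity, this turns the
  quadratic lower bound defining approximate orthogonality into a linear one.\<close>
lemma nonneg_below_chord_slope_ge:
  fixes \<phi> :: "real \<Rightarrow> real"
  assumes "0 < a" "0 \<le> k" "0 < t"
    and nonneg: "\<And>s. 0 \<le> \<phi> s"
    and chord: "\<And>s. 0 < s \<Longrightarrow> s \<le> t \<Longrightarrow> \<phi> s \<le> a + s * ((\<phi> t - a) / t)"
    and square: "\<And>s. 0 < s \<Longrightarrow> a\<^sup>2 - 2 * a * k * s \<le> (\<phi> s)\<^sup>2"
  shows "a - k * t \<le> \<phi> t"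
proof (rule ccontr)
  define A where "A = (\<phi> t - a) / t"
  assume "\<not> a - k * t \<le> \<phi> t"
  then have "A < - k"
    using \<open>0 < t\<close> by (simp add: A_def divide_less_eq algebra_simps)
  then have "A < 0" "0 < a * (- k - A)" "0 < A\<^sup>2"
    using \<open>0 < a\<close> \<open>0 \<le> k\<close> by auto
  define s where "s = min t (a * (- k - A) / A\<^sup>2)"
  have "0 < s" "s \<le> t"
    using \<open>0 < t\<close> \<open>0 < a * (- k - A)\<close> \<open>0 < A\<^sup>2\<close> by (auto simp: s_def)
  have "s * A\<^sup>2 \<le> a * (- k - A)"
    using \<open>0 < A\<^sup>2\<close> pos_le_divide_eq[of "A\<^sup>2" s "a * (- k - A)"] by (simp add: s_def)
  have "a\<^sup>2 - 2 * a * k * s \<le> (\<phi> s)\<^sup>2"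
    using square \<open>0 < s\<close> .
  also have "\<dots> \<le> (a + s * A)\<^sup>2"
    using chord[OF \<open>0 < s\<close> \<open>s \<le> t\<close>] nonneg by (simp add: A_def power_mono)
  finally have "0 \<le> s * (2 * a * A + s * A\<^sup>2 + 2 * a * k)"
    by (simp add: power2_eq_square algebra_simps)
  then have "0 \<le> 2 * a * A + s * A\<^sup>2 + 2 * a * k"
    using \<open>0 < s\<close> by (simp add: zero_le_mult_iff)
  then have "2 * (a * (- k - A)) \<le> s * A\<^sup>2"
    by (simp add: algebra_simps)
  then show False
    using \<open>s * A\<^sup>2 \<le> a * (- k - A)\<close> \<open>0 < a * (- k - A)\<close> by linarith
qed

lemma approx_bj_orth_norm_add_ge:
  assumes "approx_bj_orth \<epsilon> x y" and "0 \<le> \<epsilon>"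
  shows "norm x - \<epsilon> * \<bar>t\<bar> * norm y \<le> norm (x + t *\<^sub>R y)"
proof -
  have pos: "norm x - \<epsilon> * t * norm y' \<le> norm (x + t *\<^sub>R y')"
    if orth: "approx_bj_orth \<epsilon> x y'" and "0 < t" for y' t
  proof (cases "x = 0")
    case True
    have "norm x - \<epsilon> * t * norm y' \<le> 0"
      using True \<open>0 \<le> \<epsilon>\<close> \<open>0 < t\<close> by simp
    also have "0 \<le> norm (x + t *\<^sub>R y')"
      by simp
    finally show ?thesis .
  next
    case False
    have chord: "norm (x + s *\<^sub>R y') \<le> norm x + s * ((norm (x + t *\<^sub>R y') - norm x) / t)"
      if "0 < s" "s \<le> t" for s
    proof -
      have "x + s *\<^sub>R y' = (1 - s / t) *\<^sub>R x + (s / t) *\<^sub>R (x + t *\<^sub>R y')"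
        using \<open>0 < t\<close> by (simp add: algebra_simps)
      then have "norm (x + s *\<^sub>R y') \<le> (1 - s / t) * norm x + (s / t) * norm (x + t *\<^sub>R y')"
        using that \<open>0 < t\<close> norm_triangle_ineq[of "(1 - s / t) *\<^sub>R x" "(s / t) *\<^sub>R (x + t *\<^sub>R y')"]
        by simp
      also have "\<dots> = norm x + s * ((norm (x + t *\<^sub>R y') - norm x) / t)"
        using \<open>0 < t\<close> by (simp add: field_simps)
      finally show ?thesis .
    qed
    have square: "(norm x)\<^sup>2 - 2 * norm x * (\<epsilon> * norm y') * s \<le> (norm (x + s *\<^sub>R y'))\<^sup>2"
      if "0 < s" for s
      using orth[unfolded approx_bj_orth_def, rule_format, of s] that by (simp add: algebra_simps)
    have "norm x - \<epsilon> * norm y' * t \<le> norm (x + t *\<^sub>R y')"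
      by (rule nonneg_below_chord_slope_ge[where \<phi> = "\<lambda>s. norm (x + s *\<^sub>R y')", OF _ _ \<open>0 < t\<close>])
        (use False \<open>0 \<le> \<epsilon>\<close> chord square in auto)
    then show ?thesis
      by (simp add: algebra_simps)
  qed
  consider "0 < t" | "t = 0" | "t < 0"
    by linarith
  then show ?thesis
  proof cases
    case 3
    then show ?thesis
      using pos[of "- y" "- t"] assms(1) by (simp add: approx_bj_orth_uminus_right)
  qed (use pos assms(1) in auto)
qed

lemma approx_bj_orth_scaleR_norm_ge:
  assumes "approx_bj_orth \<epsilon> x y" and "0 \<le> \<epsilon>"
  shows "a * norm x - \<epsilon> * norm y \<le> norm (a *\<^sub>R x + y)"
proof (cases "0 < a")
  case True
  have "a * (norm x - \<epsilon> * \<bar>1 / a\<bar> * norm y) \<le> a * norm (x + (1 / a) *\<^sub>R y)"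
    using approx_bj_orth_norm_add_ge[OF assms, of "1 / a"] True by (simp add: mult_left_mono)
  also have "\<dots> = norm (a *\<^sub>R x + y)"
    using True by (simp add: scaleR_add_right flip: norm_scaleR[of a, unfolded abs_of_pos[OF True]])
  finally show ?thesis
    using True by (simp add: algebra_simps)
next
  case False
  then show ?thesis
    using \<open>0 \<le> \<epsilon>\<close> by (smt (verit) mult_nonneg_nonneg mult_nonpos_nonneg norm_ge_zero)
qed

lemma approx_bj_orth_imp_functional:
  fixes x y :: "'a::real_normed_vector"
  assumes "approx_bj_orth \<epsilon> x y" and "0 \<le> \<epsilon>"
  shows "\<exists>f::'a \<Rightarrow>\<^sub>L real. norm f \<le> 1 \<and> blinfun_apply f x = norm x
           \<and> \<bar>blinfun_apply f y\<bar> \<le> \<epsilon> * norm y"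
proof -
  \<comment> \<open>Extend \<open>a *\<^sub>R x \<mapsto> a * norm x\<close> by \<open>y \<mapsto> d\<close>, with an admissible value \<open>d\<close> of modulus
    at most \<open>\<epsilon> * norm y\<close>; the bounds below show that such a value exists.\<close>
  define L where "L = range (\<lambda>a. (a *\<^sub>R x, a * norm x))"
  define c where "c = Sup {r - norm (u - y) | u r. (u, r) \<in> L}"
  define d where "d = max c (- (\<epsilon> * norm y))"
  have L: "dominated_linear_graph norm L"
    unfolding L_def by (rule dominated_linear_graph_norm_line)
  have bounds: "r - norm (u - y) \<le> \<epsilon> * norm y \<and> - (\<epsilon> * norm y) \<le> norm (u + y) - r"
    if ur: "(u, r) \<in> L" for u r
  proof -
    obtain a where "u = a *\<^sub>R x" "r = a * norm x"
      using ur by (auto simp: L_def)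
    moreover have "a * norm x - \<epsilon> * norm (- y) \<le> norm (a *\<^sub>R x + - y)"
      using assms by (intro approx_bj_orth_scaleR_norm_ge) (simp_all add: approx_bj_orth_uminus_right)
    moreover have "a * norm x - \<epsilon> * norm y \<le> norm (a *\<^sub>R x + y)"
      using assms by (rule approx_bj_orth_scaleR_norm_ge)
    ultimately show ?thesis
      by simp
  qed
  have "c \<le> \<epsilon> * norm y"
    unfolding c_def using bounds dominated_linear_graph_zero[OF L] by (intro cSup_least) auto
  then have d_bound: "\<bar>d\<bar> \<le> \<epsilon> * norm y"
    using \<open>0 \<le> \<epsilon>\<close> by (simp add: d_def abs_le_iff)
  define E where "E = {(u + a *\<^sub>R y, r + a * d) | u r a. (u, r) \<in> L}"
  have "r + d \<le> norm (u + y) \<and> r - d \<le> norm (u - y)" if "(u, r) \<in> L" for u r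
    using dominated_linear_graph_gap_Sup[OF sublinear_norm L that, of y] bounds[OF that]
    unfolding c_def d_def by auto
  then have "dominated_linear_graph norm E"
    unfolding E_def by (rule dominated_linear_graph_extend[OF sublinear_norm L])
  from hahn_banach_norm[OF this]
  obtain f :: "'a \<Rightarrow>\<^sub>L real" where "norm f \<le> 1" and f: "\<forall>v s. (v, s) \<in> E \<longrightarrow> blinfun_apply f v = s"
    by blast
  have "(1 *\<^sub>R x + 0 *\<^sub>R y, 1 * norm x + 0 * d) \<in> E" "(0 *\<^sub>R x + 1 *\<^sub>R y, 0 * norm x + 1 * d) \<in> E"
    unfolding E_def L_def by blast+
  then have "blinfun_apply f x = norm x" "blinfun_apply f y = d"
    using f by simp_all
  then show ?thesis
    using \<open>norm f \<le> 1\<close> d_bound by auto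
qed

lemma functional_imp_approx_bj_orth:
  fixes f :: "'a::real_normed_vector \<Rightarrow>\<^sub>L real"
  assumes "norm f \<le> 1" and "blinfun_apply f x = norm x" and "\<bar>blinfun_apply f y\<bar> \<le> \<epsilon> * norm y"
  shows "approx_bj_orth \<epsilon> x y"
  unfolding approx_bj_orth_def
proof
  fix t :: real
  define a where "a = norm x"
  define b where "b = \<epsilon> * norm (t *\<^sub>R y)"
  have "0 \<le> a"
    by (simp add: a_def)
  have "a - b \<le> a - \<bar>t\<bar> * \<bar>blinfun_apply f y\<bar>"
    using mult_left_mono[OF assms(3) abs_ge_zero[of t]] by (simp add: b_def mult.left_commute[of \<epsilon>])
  also have "\<dots> \<le> blinfun_apply f (x + t *\<^sub>R y)"
    using assms(2) abs_ge_minus_self[of "t * blinfun_apply f y"]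
    by (simp add: a_def blinfun.add_right blinfun.scaleR_right abs_mult)
  also have "\<dots> \<le> norm f * norm (x + t *\<^sub>R y)"
    using norm_blinfun[of f "x + t *\<^sub>R y"] by simp
  also have "\<dots> \<le> norm (x + t *\<^sub>R y)"
    using assms(1) by (simp add: mult_left_le_one_le)
  finally have "a - b \<le> norm (x + t *\<^sub>R y)" .
  have "a\<^sup>2 - 2 * a * b \<le> (norm (x + t *\<^sub>R y))\<^sup>2"
  proof (cases "b \<le> a")
    case True
    have "a\<^sup>2 - 2 * a * b \<le> (a - b)\<^sup>2"
      by (simp add: power2_diff)
    also have "\<dots> \<le> (norm (x + t *\<^sub>R y))\<^sup>2"
      using True \<open>a - b \<le> norm (x + t *\<^sub>R y)\<close> by (simp add: power_mono)
    finally show ?thesis .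
  next
    case False
    then have "a\<^sup>2 - 2 * a * b \<le> 0"
      using \<open>0 \<le> a\<close> by (simp add: power2_eq_square mult_left_mono algebra_simps)
    then show ?thesis
      using zero_le_power2 order_trans by blast
  qed
  then show "(norm x)\<^sup>2 - 2 * \<epsilon> * norm x * norm (t *\<^sub>R y) \<le> (norm (x + t *\<^sub>R y))\<^sup>2"
    by (simp add: a_def b_def algebra_simps)
qed

theorem approx_bj_orth_iff_functional:
  fixes x y :: "'a::real_normed_vector"
  assumes "0 \<le> \<epsilon>"
  shows "approx_bj_orth \<epsilon> x y \<longleftrightarrow>
    (\<exists>f::'a \<Rightarrow>\<^sub>L real. norm f \<le> 1 \<and> blinfun_apply f x = norm x \<and> \<bar>blinfun_apply f y\<bar> \<le> \<epsilon> * norm y)"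
  using approx_bj_orth_imp_functional[OF _ assms] functional_imp_approx_bj_orth by blast

lemma support_functionalsI:
  assumes "norm f \<le> 1" and "blinfun_apply f x = norm x" and "x \<noteq> 0"
  shows "f \<in> support_functionals x"
proof -
  have "norm x \<le> norm f * norm x"
    using norm_blinfun[of f x] assms(2) by simp
  then have "1 \<le> norm f"
    using assms(3) by simp
  then show ?thesis
    using assms(1,2) by (simp add: support_functionals_def)
qed

lemma abs_blinfun_apply_le_diff:
  fixes f g :: "'a::real_normed_vector \<Rightarrow>\<^sub>L real"
  shows "\<bar>blinfun_apply f v\<bar> \<le> \<bar>blinfun_apply g v\<bar> + norm (f - g) * norm v"
proof -
  have "blinfun_apply f v = blinfun_apply g v + blinfun_apply (f - g) v"
    by (simp add: blinfun.diff_left)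
  moreover have "\<bar>blinfun_apply (f - g) v\<bar> \<le> norm (f - g) * norm v"
    using norm_blinfun[of "f - g" v] by simp
  ultimately show ?thesis
    by linarith
qed

lemma abs_blinfun_apply_add_le:
  fixes f1 f2 :: "'a::real_normed_vector \<Rightarrow>\<^sub>L real"
  assumes "\<bar>blinfun_apply f1 y1\<bar> \<le> \<epsilon> * norm y1" and "\<bar>blinfun_apply f2 y2\<bar> \<le> \<epsilon> * norm y2"
    and "norm (f1 - f2) \<le> \<epsilon>"
  shows "\<bar>blinfun_apply f1 (y1 + y2)\<bar> + \<bar>blinfun_apply f2 (y1 + y2)\<bar> \<le> 3 * \<epsilon> * (norm y1 + norm y2)"
proof -
  have triangle: "\<bar>blinfun_apply f (y1 + y2)\<bar> \<le> \<bar>blinfun_apply f y1\<bar> + \<bar>blinfun_apply f y2\<bar>"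
    for f :: "'a \<Rightarrow>\<^sub>L real"
    by (simp add: blinfun.add_right abs_triangle_ineq)
  have "norm (f1 - f2) * norm y \<le> \<epsilon> * norm y" "norm (f2 - f1) * norm y \<le> \<epsilon> * norm y" for y :: 'a
    using assms(3) by (simp_all add: mult_right_mono norm_minus_commute)
  then have "\<bar>blinfun_apply f1 y2\<bar> \<le> \<bar>blinfun_apply f2 y2\<bar> + \<epsilon> * norm y2"
    and "\<bar>blinfun_apply f2 y1\<bar> \<le> \<bar>blinfun_apply f1 y1\<bar> + \<epsilon> * norm y1"
    by (meson abs_blinfun_apply_le_diff add_left_mono order_trans)+
  then have "\<bar>blinfun_apply f1 (y1 + y2)\<bar> + \<bar>blinfun_apply f2 (y1 + y2)\<bar>
      \<le> 3 * (\<epsilon> * norm y1) + 3 * (\<epsilon> * norm y2)"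
    using assms(1,2) triangle[of f1] triangle[of f2] by linarith
  then show ?thesis
    by (simp add: algebra_simps)
qed

lemma eps_smooth_approx_bj_orth_add:
  fixes x y1 y2 :: "'a::real_normed_vector"
  assumes "x \<noteq> 0" and "0 \<le> \<epsilon>" and "eps_smooth \<epsilon> x"
    and "approx_bj_orth \<epsilon> x y1" and "approx_bj_orth \<epsilon> x y2"
  shows "approx_bj_orth (3 * \<epsilon> * (norm y1 + norm y2) / (2 * norm (y1 + y2))) x (y1 + y2)"
proof -
  obtain f1 :: "'a \<Rightarrow>\<^sub>L real" where f1: "norm f1 \<le> 1" "blinfun_apply f1 x = norm x"
    "\<bar>blinfun_apply f1 y1\<bar> \<le> \<epsilon> * norm y1"
    using assms(4) approx_bj_orth_iff_functional[OF assms(2)] by blast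
  obtain f2 :: "'a \<Rightarrow>\<^sub>L real" where f2: "norm f2 \<le> 1" "blinfun_apply f2 x = norm x"
    "\<bar>blinfun_apply f2 y2\<bar> \<le> \<epsilon> * norm y2"
    using assms(5) approx_bj_orth_iff_functional[OF assms(2)] by blast
  have "norm (f1 - f2) \<le> \<epsilon>"
    using assms(3) f1 f2 \<open>x \<noteq> 0\<close> by (simp add: eps_smooth_def support_functionalsI)
  with f1(3) f2(3) have "\<bar>blinfun_apply f1 (y1 + y2)\<bar> + \<bar>blinfun_apply f2 (y1 + y2)\<bar>
      \<le> 3 * \<epsilon> * (norm y1 + norm y2)"
    by (rule abs_blinfun_apply_add_le)
  then have "2 * \<bar>blinfun_apply f1 (y1 + y2)\<bar> \<le> 3 * \<epsilon> * (norm y1 + norm y2)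
      \<or> 2 * \<bar>blinfun_apply f2 (y1 + y2)\<bar> \<le> 3 * \<epsilon> * (norm y1 + norm y2)"
    by linarith
  then obtain f :: "'a \<Rightarrow>\<^sub>L real" where f: "norm f \<le> 1" "blinfun_apply f x = norm x"
    "2 * \<bar>blinfun_apply f (y1 + y2)\<bar> \<le> 3 * \<epsilon> * (norm y1 + norm y2)"
    using f1 f2 by blast
  \<comment> \<open>No hypothesis \<open>y1 + y2 \<noteq> 0\<close> is needed: then both sides vanish, as \<open>x / 0 = 0\<close>.\<close>
  have "\<bar>blinfun_apply f (y1 + y2)\<bar>
      \<le> 3 * \<epsilon> * (norm y1 + norm y2) / (2 * norm (y1 + y2)) * norm (y1 + y2)"
    using f(3) by (cases "y1 + y2 = 0") simp_all
  moreover have "0 \<le> 3 * \<epsilon> * (norm y1 + norm y2) / (2 * norm (y1 + y2))"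
    using assms(2) by simp
  ultimately show ?thesis
    using f(1,2) approx_bj_orth_iff_functional by blast
qed

theorem theorem4p2:
  fixes x y1 y2 :: "'a::real_normed_vector" and \<epsilon> :: real
  assumes "x \<noteq> 0" and "y1 \<noteq> 0" and "y2 \<noteq> 0"
    and "approx_bj_orth \<epsilon> x y1" and "approx_bj_orth \<epsilon> x y2"
    and "0 \<le> \<epsilon>" and "\<epsilon> < 1"
    and "\<epsilon> < 2 * norm (y1 + y2) / (3 * (norm y1 + norm y2))"
    and "2 * norm (y1 + y2) / (3 * (norm y1 + norm y2)) < 1"
    and "eps_smooth \<epsilon> x"
  shows "\<exists>\<epsilon>1. 0 \<le> \<epsilon>1 \<and> \<epsilon>1 < 1 \<and> approx_bj_orth \<epsilon>1 x (y1 + y2)"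
proof -
  have "0 < norm y1 + norm y2"
    using assms(2) by (simp add: add_pos_nonneg)
  moreover have "0 < 2 * norm (y1 + y2) / (3 * (norm y1 + norm y2))"
    using assms(6,8) by linarith
  ultimately have "0 < norm (y1 + y2)"
    by (simp add: zero_less_divide_iff)
  then have "3 * \<epsilon> * (norm y1 + norm y2) / (2 * norm (y1 + y2)) < 1"
    using assms(8) \<open>0 < norm y1 + norm y2\<close>
    by (simp add: divide_less_eq less_divide_eq mult.commute mult.left_commute)
  moreover have "0 \<le> 3 * \<epsilon> * (norm y1 + norm y2) / (2 * norm (y1 + y2))"
    using assms(6) by simp
  ultimately show ?thesis
    using eps_smooth_approx_bj_orth_add[OF assms(1,6,10,4,5)] by blast
qed

end
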